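(* Let $\mathbf{X}_1,\dots,\mathbf{X}_T\in\mathbb{R}^{d\times\ell}$, $\mathbf{Z}_1,\dots,\mathbf{Z}_T\in\mathbb{R}^{2k\times k}$ with $2k\le d$, and let $L(\mathbf{Q})=-\sum_{i=1}^T\|\mathbf{X}_i^\top\mathbf{Q}\mathbf{Z}_i\|_F^2$ for $\mathbf{Q}\in\mathbb{R}^{d\times 2k}$. Given $\mathbf{Q}'\in\mathrm{St}(d,2k)$, let $\mathbf{R}=\sum_{i=1}^T\mathbf{X}_i\mathbf{X}_i^\top\mathbf{Q}'\mathbf{Z}_i\mathbf{Z}_i^\top$ with thin SVD $\mathbf{R}=\mathbf{W}\boldsymbol{\Sigma}\mathbf{V}^\top$, and set $\hat{\mathbf{Q}}=\mathbf{W}\mathbf{V}^\top$. Then $\hat{\mathbf{Q}}\in\arg\min_{\mathbf{Q}\in\mathrm{St}(d,2k)}\|\mathbf{Q}-\mathbf{R}\|_F^2$ and $L(\hat{\mathbf{Q}})\le L(\mathbf{Q}')$. In particular, with $\mathbf{Z}_i=[\cos(\boldsymbol{\Theta}t_i);\sin(\boldsymbol{\Theta}t_i)]$ and $\mathbf{Q}=[\mathbf{H}\ \mathbf{Y}]$, one has $\mathbf{R}=\sum_i[\mathbf{X}_i\mathbf{G}_i^\top\cos(\boldsymbol{\Theta}t_i)\ \ \mathbf{X}_i\mathbf{G}_i^\top\sin(\boldsymbol{\Theta}t_i)]$ with $\mathbf{G}_i=(\mathbf{Q}'\mathbf{Z}_i)^\top\mathbf{X}_i$, and the update does not increase the loss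 $-\sum_i\|\mathbf{X}_i^\top(\mathbf{H}\cos(\boldsymbol{\Theta}t_i)+\mathbf{Y}\sin(\boldsymbol{\Theta}t_i))\|_F^2$ for fixed $\boldsymbol{\Theta}$.
   Context: $\mathrm{St}(d,p)=\{\mathbf{Q}\in\mathbb{R}^{d\times p}:\mathbf{Q}^\top\mathbf{Q}=\mathbf{I}_p\}$ (Stiefel manifold). $\boldsymbol{\Theta}$ is a real diagonal $k\times k$ matrix, $t_i\in\mathbb{R}$, and $[\cdot;\cdot]$ denotes vertical stacking. *)

theory Defs
  imports "HOL-Analysis.Analysis"
begin

text \<open>Matrices are HOL-Analysis matrices: an m x n real matrix is \<open>real^'n^'m\<close>.
  The dimension 2k is represented by the sum type \<open>'k + 'k\<close> (CARD = 2 CARD('k)).\<close>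

definition frob_sq :: "real^'n^'m \<Rightarrow> real" where
  "frob_sq A = (\<Sum>i\<in>UNIV. \<Sum>j\<in>UNIV. (A $ i $ j)^2)"

definition stiefel :: "(real^'p^'d) set" where
  "stiefel = {Q. transpose Q ** Q = mat 1}"

definition diag_mat :: "real^'n^'n \<Rightarrow> bool" where
  "diag_mat A \<longleftrightarrow> (\<forall>i j. i \<noteq> j \<longrightarrow> A $ i $ j = 0)"

definition lossL :: "nat \<Rightarrow> (nat \<Rightarrow> real^'l^'d) \<Rightarrow> (nat \<Rightarrow> real^'k^'p) \<Rightarrow> real^'p^'d \<Rightarrow> real" where
  "lossL T X Z Q = - (\<Sum>i\<in>{1..T}. frob_sq (transpose (X i) ** Q ** Z i))"

definition Rmat :: "nat \<Rightarrow> (nat \<Rightarrow> real^'l^'d) \<Rightarrow> (nat \<Rightarrow> real^'k^'p) \<Rightarrow> real^'p^'d \<Rightarrow> real^'p^'d" where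
  "Rmat T X Z Q' = (\<Sum>i\<in>{1..T}. X i ** transpose (X i) ** Q' ** Z i ** transpose (Z i))"

definition mcos :: "real^'k^'k \<Rightarrow> real \<Rightarrow> real^'k^'k" where
  "mcos Th t = (\<chi> i j. if i = j then cos (Th $ i $ i * t) else 0)"

definition msin :: "real^'k^'k \<Rightarrow> real \<Rightarrow> real^'k^'k" where
  "msin Th t = (\<chi> i j. if i = j then sin (Th $ i $ i * t) else 0)"

definition vstack :: "real^'n^'a \<Rightarrow> real^'n^'b \<Rightarrow> real^'n^('a + 'b)" where
  "vstack A B = (\<chi> r. case r of Inl a \<Rightarrow> A $ a | Inr b \<Rightarrow> B $ b)"

definition hstack :: "real^'a^'m \<Rightarrow> real^'b^'m \<Rightarrow> real^('a + 'b)^'m" where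
  "hstack H Y = (\<chi> r c. case c of Inl a \<Rightarrow> H $ r $ a | Inr b \<Rightarrow> Y $ r $ b)"

end

theory Submission
  imports Defs
begin

text \<open>The loss \<open>L\<close> is concave, and its linearisation at \<open>Q'\<close> is \<open>Q \<mapsto> L(Q') - 2\<langle>R, Q - Q'\<rangle>\<close>,
  so \<open>L(Q) \<le> L(Q')\<close> whenever \<open>\<langle>R, Q\<rangle> \<ge> \<langle>R, Q'\<rangle>\<close>. On the Stiefel manifold \<open>\<Vert>Q - R\<Vert>\<^sup>2\<close>
  differs from \<open>-2\<langle>Q, R\<rangle>\<close> by a constant, and with \<open>R = W\<Sigma>V\<^sup>T\<close> one has
  \<open>\<langle>Q, R\<rangle> = \<Sum>\<^sub>j \<sigma>\<^sub>j (W\<^sup>T Q V)\<^sub>j\<^sub>j \<le> \<Sum>\<^sub>j \<sigma>\<^sub>j\<close>, since the columns of \<open>W\<close> and \<open>QV\<close> are unit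
  vectors; equality holds at \<open>Q = WV\<^sup>T\<close>. Hence \<open>WV\<^sup>T\<close> solves the Procrustes problem and
  in particular beats \<open>Q'\<close> in \<open>\<langle>\<cdot>, R\<rangle>\<close>. The rotational form is the special case
  \<open>Z\<^sub>i = [cos(\<Theta>t\<^sub>i); sin(\<Theta>t\<^sub>i)]\<close>, unfolded blockwise.\<close>

definition frob_inner :: "real^'n^'m \<Rightarrow> real^'n^'m \<Rightarrow> real" where
  "frob_inner A B = (\<Sum>i\<in>UNIV. \<Sum>j\<in>UNIV. A $ i $ j * B $ i $ j)"

lemma frob_sq_eq_frob_inner: "frob_sq A = frob_inner A A"
  by (simp add: frob_sq_def frob_inner_def power2_eq_square)

lemma frob_inner_commute: "frob_inner A B = frob_inner B A"
  by (simp add: frob_inner_def mult.commute)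

lemma frob_inner_diff_right: "frob_inner A (B - C) = frob_inner A B - frob_inner A C"
  by (simp add: frob_inner_def algebra_simps sum_subtractf)

lemma frob_inner_sum_left: "frob_inner (\<Sum>i\<in>I. F i) B = (\<Sum>i\<in>I. frob_inner (F i) B)"
  by (induction I rule: infinite_finite_induct)
     (simp_all add: frob_inner_def algebra_simps sum.distrib sum.swap[of _ I])

lemma frob_inner_mult_left: "frob_inner (A ** B) C = frob_inner B (transpose A ** C)"
proof -
  have "frob_inner (A ** B) C = (\<Sum>i\<in>UNIV. \<Sum>j\<in>UNIV. \<Sum>k\<in>UNIV. A$i$k * B$k$j * C$i$j)"
    by (simp add: frob_inner_def matrix_matrix_mult_def sum_distrib_right)
  also have "\<dots> = (\<Sum>i\<in>UNIV. \<Sum>k\<in>UNIV. \<Sum>j\<in>UNIV. A$i$k * B$k$j * C$i$j)"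
    by (rule sum.cong[OF refl], rule sum.swap)
  also have "\<dots> = (\<Sum>k\<in>UNIV. \<Sum>i\<in>UNIV. \<Sum>j\<in>UNIV. A$i$k * B$k$j * C$i$j)"
    by (rule sum.swap)
  also have "\<dots> = (\<Sum>k\<in>UNIV. \<Sum>j\<in>UNIV. \<Sum>i\<in>UNIV. A$i$k * B$k$j * C$i$j)"
    by (rule sum.cong[OF refl], rule sum.swap)
  also have "\<dots> = frob_inner B (transpose A ** C)"
    by (simp add: frob_inner_def matrix_matrix_mult_def transpose_def sum_distrib_left mult_ac)
  finally show ?thesis .
qed

lemma frob_inner_mult_right: "frob_inner (A ** B) C = frob_inner A (C ** transpose B)"
proof -
  have "frob_inner (A ** B) C = (\<Sum>i\<in>UNIV. \<Sum>j\<in>UNIV. \<Sum>k\<in>UNIV. A$i$k * B$k$j * C$i$j)"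
    by (simp add: frob_inner_def matrix_matrix_mult_def sum_distrib_right)
  also have "\<dots> = (\<Sum>i\<in>UNIV. \<Sum>k\<in>UNIV. \<Sum>j\<in>UNIV. A$i$k * B$k$j * C$i$j)"
    by (rule sum.cong[OF refl], rule sum.swap)
  also have "\<dots> = frob_inner A (C ** transpose B)"
    by (simp add: frob_inner_def matrix_matrix_mult_def transpose_def sum_distrib_left mult_ac)
  finally show ?thesis .
qed

lemma frob_inner_eq_trace: "frob_inner A B = (\<Sum>j\<in>UNIV. (transpose A ** B) $ j $ j)"
  by (simp add: frob_inner_def matrix_matrix_mult_def transpose_def, rule sum.swap)

lemma frob_inner_diag_left:
  assumes "diag_mat S"
  shows "frob_inner S M = (\<Sum>j\<in>UNIV. S$j$j * M$j$j)"
proof -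
  have "(\<Sum>j\<in>UNIV. S$i$j * M$i$j) = (\<Sum>j\<in>UNIV. if j = i then S$i$i * M$i$i else 0)" for i
    by (rule sum.cong) (use assms in \<open>auto simp: diag_mat_def\<close>)
  then show ?thesis by (simp add: frob_inner_def)
qed

lemma frob_sq_nonneg: "frob_sq A \<ge> 0"
  by (simp add: frob_sq_def sum_nonneg)

lemma frob_sq_add: "frob_sq (A + B) = frob_sq A + 2 * frob_inner A B + frob_sq B"
  by (simp add: frob_sq_def frob_inner_def power2_sum sum.distrib sum_distrib_left algebra_simps)

lemma frob_sq_diff: "frob_sq (A - B) = frob_sq A - 2 * frob_inner A B + frob_sq B"
  by (simp add: frob_sq_def frob_inner_def power2_diff sum.distrib sum_subtractf
      sum_distrib_left algebra_simps)

lemma matrix_add_rdistrib: "(B + C) ** (A::real^_^_) = B ** A + C ** A"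
  by (simp add: vec_eq_iff matrix_matrix_mult_def sum.distrib distrib_right)

lemma stiefel_frob_sq:
  assumes "(Q::real^'p^'d) \<in> stiefel"
  shows "frob_sq Q = real CARD('p)"
  using assms by (simp add: frob_sq_eq_frob_inner frob_inner_eq_trace stiefel_def mat_def)

lemma stiefel_mult_orthogonal:
  assumes "Q \<in> stiefel" and "transpose V ** V = mat 1"
  shows "Q ** V \<in> stiefel"
proof -
  have "transpose (Q ** V) ** (Q ** V) = transpose V ** (transpose Q ** Q) ** V"
    by (simp add: matrix_transpose_mul matrix_mul_assoc)
  with assms show ?thesis by (simp add: stiefel_def)
qed

lemma stiefel_mult_transpose_orthogonal:
  fixes V :: "real^'p^'p"
  assumes "W \<in> stiefel" and "transpose V ** V = mat 1"
  shows "W ** transpose V \<in> stiefel"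
proof -
  have "V ** transpose V = mat 1"
    using assms(2) orthogonal_matrix orthogonal_matrix_def by blast
  then show ?thesis
    using stiefel_mult_orthogonal[OF assms(1), of "transpose V"] by simp
qed

lemma stiefel_transpose_mult_diag_le_1:
  assumes "A \<in> stiefel" and "B \<in> stiefel"
  shows "(transpose A ** B) $ j $ j \<le> 1"
proof -
  have "(\<Sum>i\<in>UNIV. (A$i$j)^2) = 1" "(\<Sum>i\<in>UNIV. (B$i$j)^2) = 1"
    using arg_cong[OF assms(1)[unfolded stiefel_def, simplified], of "\<lambda>M. M$j$j"]
      arg_cong[OF assms(2)[unfolded stiefel_def, simplified], of "\<lambda>M. M$j$j"]
    by (simp_all add: matrix_matrix_mult_def transpose_def mat_def power2_eq_square)
  moreover have "2 * (transpose A ** B) $ j $ j = (\<Sum>i\<in>UNIV. 2 * (A$i$j * B$i$j))"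
    by (simp add: matrix_matrix_mult_def transpose_def sum_distrib_left)
  moreover have "\<dots> \<le> (\<Sum>i\<in>UNIV. (A$i$j)^2 + (B$i$j)^2)"
    by (rule sum_mono) (metis sum_squares_bound mult.assoc)
  ultimately show ?thesis
    by (simp add: sum.distrib)
qed

lemma procrustes_frob_inner_le:
  fixes W :: "real^'p^'d" and S V :: "real^'p^'p"
  assumes W: "W \<in> stiefel" and S_diag: "diag_mat S" and S_nonneg: "\<forall>j. S $ j $ j \<ge> 0"
    and V: "transpose V ** V = mat 1" and Q: "Q \<in> stiefel"
  shows "frob_inner Q (W ** S ** transpose V)
           \<le> frob_inner (W ** transpose V) (W ** S ** transpose V)"
proof -
  have inner_eq: "frob_inner P (W ** S ** transpose V)
                    = (\<Sum>j\<in>UNIV. S$j$j * (transpose W ** (P ** V))$j$j)" for P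
  proof -
    have "frob_inner P (W ** S ** transpose V) = frob_inner ((W ** S) ** transpose V) P"
      by (rule frob_inner_commute)
    also have "\<dots> = frob_inner (W ** S) (P ** V)"
      by (simp add: frob_inner_mult_right)
    also have "\<dots> = frob_inner S (transpose W ** (P ** V))"
      by (rule frob_inner_mult_left)
    finally show ?thesis
      by (simp add: frob_inner_diag_left[OF S_diag])
  qed
  have "frob_inner Q (W ** S ** transpose V) \<le> (\<Sum>j\<in>UNIV. S$j$j)"
    unfolding inner_eq
    by (rule sum_mono)
       (metis S_nonneg stiefel_transpose_mult_diag_le_1[OF W stiefel_mult_orthogonal[OF Q V]]
         mult_left_le mult.commute)
  moreover have "transpose W ** ((W ** transpose V) ** V) = mat 1"
    using W V by (simp add: stiefel_def flip: matrix_mul_assoc)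
  ultimately show ?thesis
    by (simp add: inner_eq mat_def)
qed

lemma procrustes_argmin:
  fixes W :: "real^'p^'d" and S V :: "real^'p^'p"
  assumes W: "W \<in> stiefel" and S_diag: "diag_mat S" and S_nonneg: "\<forall>j. S $ j $ j \<ge> 0"
    and V: "transpose V ** V = mat 1" and Q: "Q \<in> stiefel"
  shows "frob_sq (W ** transpose V - W ** S ** transpose V)
           \<le> frob_sq (Q - W ** S ** transpose V)"
  using procrustes_frob_inner_le[OF assms] stiefel_frob_sq[OF Q]
    stiefel_frob_sq[OF stiefel_mult_transpose_orthogonal[OF W V]]
  by (simp add: frob_sq_diff)

lemma frob_inner_Rmat_left:
  "frob_inner (Rmat T X Z Q') E
     = (\<Sum>i\<in>{1..T}. frob_inner (transpose (X i) ** Q' ** Z i) (transpose (X i) ** E ** Z i))"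
proof -
  have "frob_inner (X i ** (transpose (X i) ** Q' ** Z i) ** transpose (Z i)) E
          = frob_inner (transpose (X i) ** Q' ** Z i) (transpose (X i) ** E ** Z i)" for i
  proof -
    have "frob_inner (X i ** (transpose (X i) ** Q' ** Z i) ** transpose (Z i)) E
            = frob_inner (X i ** (transpose (X i) ** Q' ** Z i)) (E ** Z i)"
      by (simp only: frob_inner_mult_right transpose_transpose)
    also have "\<dots> = frob_inner (transpose (X i) ** Q' ** Z i) (transpose (X i) ** (E ** Z i))"
      by (rule frob_inner_mult_left)
    finally show ?thesis
      by (simp add: matrix_mul_assoc)
  qed
  then show ?thesis
    by (simp add: Rmat_def frob_inner_sum_left matrix_mul_assoc)
qed

lemma lossL_le_of_frob_inner_Rmat_le:
  assumes "frob_inner (Rmat T X Z Q') Q' \<le> frob_inner (Rmat T X Z Q') Q"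
  shows "lossL T X Z Q \<le> lossL T X Z Q'"
proof -
  define D where "D = Q - Q'"
  have "transpose (X i) ** Q ** Z i = transpose (X i) ** Q' ** Z i + transpose (X i) ** D ** Z i"
    for i
  proof -
    have "Q = Q' + D" by (simp add: D_def)
    then show ?thesis by (simp add: matrix_add_ldistrib matrix_add_rdistrib)
  qed
  then have "lossL T X Z Q
      = lossL T X Z Q' - 2 * frob_inner (Rmat T X Z Q') D
        - (\<Sum>i\<in>{1..T}. frob_sq (transpose (X i) ** D ** Z i))"
    by (simp add: lossL_def frob_sq_add frob_inner_Rmat_left sum.distrib sum_distrib_left)
  moreover have "(\<Sum>i\<in>{1..T}. frob_sq (transpose (X i) ** D ** Z i)) \<ge> 0"
    by (simp add: sum_nonneg frob_sq_nonneg)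
  ultimately show ?thesis
    using assms by (simp add: D_def frob_inner_diff_right)
qed

lemma mult_transpose_vstack:
  "M ** transpose (vstack A B) = hstack (M ** transpose A) (M ** transpose B)"
  by (simp add: vec_eq_iff hstack_def vstack_def matrix_matrix_mult_def transpose_def
      split: sum.split)

lemma hstack_mult_vstack: "hstack H Y ** vstack C S = H ** C + Y ** S"
  by (simp add: vec_eq_iff hstack_def vstack_def matrix_matrix_mult_def sum.Plus
      flip: UNIV_Plus_UNIV)

lemma transpose_mcos [simp]: "transpose (mcos Th t) = mcos Th t"
  by (simp add: vec_eq_iff transpose_def mcos_def)

lemma transpose_msin [simp]: "transpose (msin Th t) = msin Th t"
  by (simp add: vec_eq_iff transpose_def msin_def)

lemma Rmat_vstack:
  "Rmat T X (\<lambda>i. vstack (A i) (B i)) Q'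
     = (\<Sum>i\<in>{1..T}. let G = transpose (Q' ** vstack (A i) (B i)) ** X i in
          hstack (X i ** transpose G ** transpose (A i)) (X i ** transpose G ** transpose (B i)))"
  by (simp add: Rmat_def Let_def matrix_transpose_mul mult_transpose_vstack matrix_mul_assoc)

lemma lossL_hstack_vstack:
  "lossL T X (\<lambda>i. vstack (A i) (B i)) (hstack H Y)
     = - (\<Sum>i\<in>{1..T}. frob_sq (transpose (X i) ** (H ** A i + Y ** B i)))"
  by (simp add: lossL_def hstack_mult_vstack flip: matrix_mul_assoc)

theorem mainTheorem4:
  fixes T :: nat
    and X :: "nat \<Rightarrow> real^'l^'d"
    and Z :: "nat \<Rightarrow> real^'k^('k + 'k)"
    and Q' :: "real^('k + 'k)^'d"
    and W :: "real^('k + 'k)^'d"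
    and S :: "real^('k + 'k)^('k + 'k)"
    and V :: "real^('k + 'k)^('k + 'k)"
  assumes dim: "CARD('k + 'k) \<le> CARD('d)"
    and Q'_st: "Q' \<in> stiefel"
    and W_orth: "transpose W ** W = mat 1"
    and S_diag: "diag_mat S" and S_nonneg: "\<forall>j. S $ j $ j \<ge> 0"
    and V_orth: "transpose V ** V = mat 1"
    and svd: "Rmat T X Z Q' = W ** S ** transpose V"
  shows "(W ** transpose V \<in> stiefel \<and>
          (\<forall>Q\<in>stiefel. frob_sq (W ** transpose V - Rmat T X Z Q')
                          \<le> frob_sq (Q - Rmat T X Z Q')))
       \<and> lossL T X Z (W ** transpose V) \<le> lossL T X Z Q'
       \<and> (\<forall>(Th :: real^'k^'k) (t :: nat \<Rightarrow> real).
            diag_mat Th \<and> (\<forall>i. Z i = vstack (mcos Th (t i)) (msin Th (t i))) \<longrightarrow>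
            (let G = (\<lambda>i. transpose (Q' ** Z i) ** X i) in
              Rmat T X Z Q' =
                (\<Sum>i\<in>{1..T}. hstack (X i ** transpose (G i) ** mcos Th (t i))
                                     (X i ** transpose (G i) ** msin Th (t i))))
            \<and> (\<forall>H Y H' Y'. Q' = hstack H' Y' \<and> W ** transpose V = hstack H Y \<longrightarrow>
                 - (\<Sum>i\<in>{1..T}. frob_sq (transpose (X i) ** (H ** mcos Th (t i) + Y ** msin Th (t i))))
                 \<le> - (\<Sum>i\<in>{1..T}. frob_sq (transpose (X i) ** (H' ** mcos Th (t i) + Y' ** msin Th (t i))))))"
proof -
  have W_st: "W \<in> stiefel"
    using W_orth by (simp add: stiefel_def)
  have descent: "lossL T X Z (W ** transpose V) \<le> lossL T X Z Q'"
    using procrustes_frob_inner_le[OF W_st S_diag S_nonneg V_orth Q'_st]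
    by (intro lossL_le_of_frob_inner_Rmat_le) (simp add: svd frob_inner_commute)
  have Z_iff: "(\<forall>i. Z i = vstack (mcos Th (t i)) (msin Th (t i)))
                 \<longleftrightarrow> Z = (\<lambda>i. vstack (mcos Th (t i)) (msin Th (t i)))" for Th t
    by (auto simp: fun_eq_iff)
  show ?thesis
    using stiefel_mult_transpose_orthogonal[OF W_st V_orth] descent
      procrustes_argmin[OF W_st S_diag S_nonneg V_orth, folded svd]
    by (auto simp: Z_iff Rmat_vstack lossL_hstack_vstack Let_def)
qed

end
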